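(* For every positive integer $n$ and every $r \in [\frac{\sqrt{3}}{4}, \frac{1}{2})$, we have $N_n(r) = \lceil \frac{n}{3} \rceil$.
   Context: For a positive integer $n$, let $\mathcal{P}_n$ denote the family of all sets of $n$ points in the Euclidean plane such that the distance between any two points of the set is at most $1$. For $0 < r \le 1$, let $N_n(r)$ be the largest integer $k$ such that for every $P \in \mathcal{P}_n$ there exists a circle of radius $r$ (i.e. a closed disc of radius $r$) which covers (contains) at least $k$ points of $P$. *)

theory Defs
  imports "HOL-Analysis.Analysis"
begin

definition point_family :: "nat \<Rightarrow> (real^2) set set" where
  "point_family n = {P. finite P \<and> card P = n \<and> (\<forall>x\<in>P. \<forall>y\<in>P. dist x y \<le> 1)}"

definition N :: "nat \<Rightarrow> real \<Rightarrow> nat" where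
  "N n r = (GREATEST k. \<forall>P\<in>point_family n. \<exists>c. card (P \<inter> cball c r) \<ge> k)"

end

theory Submission
  imports Defs
begin

(* Lower bound: measure a set of diameter at most 1 along three unit directions at 120 degrees.
   Each coordinate varies by at most 1, so the set lies in a hexagon cut out by three strips of
   width 1, and the three coordinates of a point sum to 0. Cutting the hexagon according to
   which coordinate is largest (or, after a point reflection, smallest) gives three pieces, each
   inside a disc of radius sqrt 3 / 4; one of these discs contains at least n / 3 of the points.
   Upper bound: place the points in three clusters at the vertices of an equilateral triangle of
   side 1, each pulled slightly and differently towards the centre so that they are distinct.
   Points of different clusters stay more than 2 r apart, so a disc of radius r < 1 / 2 meets
   only one cluster, which has at most ceiling (n / 3) points. *)

lemma dist_vec2_sq: "(dist x y)\<^sup>2 = (x$1 - y$1)\<^sup>2 + (x$2 - y$2)\<^sup>2" for x y :: "real^2"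
  by (simp add: dist_vec_def L2_set_def sum_2 dist_real_def)

lemma abs_linear_form_le_dist:
  fixes x y :: "real^2"
  assumes "a\<^sup>2 + b\<^sup>2 = 1"
  shows "\<bar>a * (x$1 - y$1) + b * (x$2 - y$2)\<bar> \<le> dist x y"
proof (rule power2_le_imp_le)
  let ?d1 = "x$1 - y$1" and ?d2 = "x$2 - y$2"
  have "(a * ?d1 + b * ?d2)\<^sup>2 = (a\<^sup>2 + b\<^sup>2) * (?d1\<^sup>2 + ?d2\<^sup>2) - (a * ?d2 - b * ?d1)\<^sup>2"
    by (simp add: power2_eq_square algebra_simps)
  also have "\<dots> \<le> (dist x y)\<^sup>2"
    using assms by (simp add: dist_vec2_sq)
  finally show "\<bar>a * ?d1 + b * ?d2\<bar>\<^sup>2 \<le> (dist x y)\<^sup>2" by simp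
qed simp

(* Coordinates along the unit vectors at angles 0, 2 pi / 3 and 4 pi / 3. They sum to 0, and
   hex_point z1 z2 z3 is the point with coordinates z1, z2, z3 whenever z1 + z2 + z3 = 0. *)
definition hex1 :: "real^2 \<Rightarrow> real" where
  "hex1 x = x$1"

definition hex2 :: "real^2 \<Rightarrow> real" where
  "hex2 x = - x$1 / 2 + sqrt 3 / 2 * x$2"

definition hex3 :: "real^2 \<Rightarrow> real" where
  "hex3 x = - x$1 / 2 - sqrt 3 / 2 * x$2"

definition hex_point :: "real \<Rightarrow> real \<Rightarrow> real \<Rightarrow> real^2" where
  "hex_point z1 z2 z3 = vector [z1, (z2 - z3) / sqrt 3]"

lemma hex_sum: "hex1 x + hex2 x + hex3 x = 0"
  by (simp add: hex1_def hex2_def hex3_def)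

lemma hex_uminus [simp]: "hex1 (- x) = - hex1 x" "hex2 (- x) = - hex2 x" "hex3 (- x) = - hex3 x"
  by (simp_all add: hex1_def hex2_def hex3_def)

lemma abs_hex_diff_le_dist:
  "\<bar>hex1 x - hex1 y\<bar> \<le> dist x y" "\<bar>hex2 x - hex2 y\<bar> \<le> dist x y" "\<bar>hex3 x - hex3 y\<bar> \<le> dist x y"
proof -
  have unit: "1\<^sup>2 + 0\<^sup>2 = (1::real)" "(- 1 / 2)\<^sup>2 + (sqrt 3 / 2)\<^sup>2 = (1::real)"
    "(- 1 / 2)\<^sup>2 + (- sqrt 3 / 2)\<^sup>2 = (1::real)"
    by (simp_all add: power2_eq_square)
  show "\<bar>hex1 x - hex1 y\<bar> \<le> dist x y"
    using abs_linear_form_le_dist[OF unit(1), of x y] by (simp add: hex1_def)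
  show "\<bar>hex2 x - hex2 y\<bar> \<le> dist x y"
    using abs_linear_form_le_dist[OF unit(2), of x y] by (simp add: hex2_def algebra_simps)
  show "\<bar>hex3 x - hex3 y\<bar> \<le> dist x y"
    using abs_linear_form_le_dist[OF unit(3), of x y] by (simp add: hex3_def algebra_simps)
qed

lemma dist_hex_point_sq:
  assumes "z1 + z2 + z3 = 0"
  shows "(dist x (hex_point z1 z2 z3))\<^sup>2
    = 2/3 * ((hex1 x - z1)\<^sup>2 + (hex2 x - z2)\<^sup>2 + (hex3 x - z3)\<^sup>2)"
proof -
  have z1: "z1 = - z2 - z3" using assms by linarith
  have "sqrt 3 * sqrt 3 = (3::real)" by simp
  then show ?thesis
    unfolding dist_vec2_sq hex_point_def hex1_def hex2_def hex3_def z1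
    by (simp add: power2_eq_square field_simps)
qed

lemma hex_cap_bound_ordered:
  fixes b c :: real
  assumes "-1/2 \<le> b" "b \<le> c" "b + 2*c \<le> 0" "-1 \<le> b + 2*c" "-1 \<le> 2*b + c"
  shows "(- b - c - 1/4)\<^sup>2 + (b + 1/8)\<^sup>2 + (c + 1/8)\<^sup>2 \<le> 9/32"
proof -
  define p where "p = - (b + 2*c)"
  define q where "q = 3*b + 3/2"
  have "9/32 - ((- b - c - 1/4)\<^sup>2 + (b + 1/8)\<^sup>2 + (c + 1/8)\<^sup>2)
      = 11/24 * (q * (c - b)) + 1/8 * (q * (2*b + c + 1)) + 1/4 * (p * (1 + b + 2*c))
        + 1/2 * (p * (2*b + c + 1)) + 1/24 * (p * q)"
    unfolding p_def q_def by (simp add: power2_eq_square field_simps)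
  moreover have "0 \<le> p" "0 \<le> q" using assms by (simp_all add: p_def q_def)
  ultimately show ?thesis
    using assms mult_nonneg_nonneg[of q "c - b"] mult_nonneg_nonneg[of q "2*b + c + 1"]
      mult_nonneg_nonneg[of p "1 + b + 2*c"] mult_nonneg_nonneg[of p "2*b + c + 1"]
      mult_nonneg_nonneg[of p q]
    by linarith
qed

(* The part of the hexagon where the first coordinate is largest lies in the disc of radius
   sqrt 3 / 4 about the point with coordinates (1/4, -1/8, -1/8): by dist_hex_point_sq the bound
   9/32 = 3/2 * 3/16 is exactly that radius. *)
lemma hex_cap_bound:
  fixes a b c t :: real
  assumes "a + b + c = 0" "-1/2 \<le> t" "t \<le> b" "t \<le> c" "a \<le> t + 1" "b \<le> a" "c \<le> a"
  shows "(a - 1/4)\<^sup>2 + (b + 1/8)\<^sup>2 + (c + 1/8)\<^sup>2 \<le> 9/32"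
proof -
  have a: "a = - b - c" using assms(1) by linarith
  show ?thesis
  proof (cases "b \<le> c")
    case True
    then show ?thesis using assms unfolding a by (intro hex_cap_bound_ordered) linarith+
  next
    case False
    then have "(- c - b - 1/4)\<^sup>2 + (c + 1/8)\<^sup>2 + (b + 1/8)\<^sup>2 \<le> 9/32"
      using assms unfolding a by (intro hex_cap_bound_ordered) linarith+
    moreover have "- c - b - 1/4 = - b - c - 1/4" by simp
    ultimately show ?thesis unfolding a by (simp add: add.commute)
  qed
qed

definition hexagon :: "real \<Rightarrow> real \<Rightarrow> real \<Rightarrow> (real^2) set" where
  "hexagon m1 m2 m3 = {x. m1 \<le> hex1 x \<and> hex1 x \<le> m1 + 1 \<and> m2 \<le> hex2 x \<and> hex2 x \<le> m2 + 1
                         \<and> m3 \<le> hex3 x \<and> hex3 x \<le> m3 + 1}"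

lemma uminus_mem_hexagon_iff:
  "- x \<in> hexagon m1 m2 m3 \<longleftrightarrow> x \<in> hexagon (- m1 - 1) (- m2 - 1) (- m3 - 1)"
  by (auto simp: hexagon_def)

lemma le_sqrt3_div4_if_sq_le: "d\<^sup>2 \<le> 3/16 \<Longrightarrow> d \<le> sqrt 3 / 4"
  using real_le_rsqrt[of d "3/16"] by (simp add: real_sqrt_divide)

lemma hexagon_subset_three_cballs_if_sum_ge:
  assumes "-3/2 \<le> m1 + m2 + m3"
  shows "\<exists>c1 c2 c3. hexagon m1 m2 m3 \<subseteq> cball c1 (sqrt 3 / 4) \<union> cball c2 (sqrt 3 / 4) \<union> cball c3 (sqrt 3 / 4)"
proof -
  define t where "t = (m1 + m2 + m3) / 3"
  define w1 where "w1 = m1 - t"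
  define w2 where "w2 = m2 - t"
  define w3 where "w3 = m3 - t"
  have w: "w1 + w2 + w3 = 0" by (simp add: w1_def w2_def w3_def t_def field_simps)
  let ?c1 = "hex_point (w1 + 1/4) (w2 - 1/8) (w3 - 1/8)"
  let ?c2 = "hex_point (w1 - 1/8) (w2 + 1/4) (w3 - 1/8)"
  let ?c3 = "hex_point (w1 - 1/8) (w2 - 1/8) (w3 + 1/4)"
  have "x \<in> cball ?c1 (sqrt 3 / 4) \<union> cball ?c2 (sqrt 3 / 4) \<union> cball ?c3 (sqrt 3 / 4)"
    if "x \<in> hexagon m1 m2 m3" for x
  proof -
    define y1 where "y1 = hex1 x - w1"
    define y2 where "y2 = hex2 x - w2"
    define y3 where "y3 = hex3 x - w3"
    have y: "y1 + y2 + y3 = 0" using hex_sum[of x] w by (simp add: y1_def y2_def y3_def)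
    have bounds: "t \<le> y1" "y1 \<le> t + 1" "t \<le> y2" "y2 \<le> t + 1" "t \<le> y3" "y3 \<le> t + 1"
      using that by (auto simp: hexagon_def y1_def y2_def y3_def w1_def w2_def w3_def)
    have "-1/2 \<le> t" using assms by (simp add: t_def)
    have near: "dist (hex_point (w1 + e1) (w2 + e2) (w3 + e3)) x \<le> sqrt 3 / 4"
      if "e1 + e2 + e3 = 0" "(y1 - e1)\<^sup>2 + (y2 - e2)\<^sup>2 + (y3 - e3)\<^sup>2 \<le> 9/32" for e1 e2 e3
    proof (rule le_sqrt3_div4_if_sq_le)
      have "(dist x (hex_point (w1 + e1) (w2 + e2) (w3 + e3)))\<^sup>2
          = 2/3 * ((y1 - e1)\<^sup>2 + (y2 - e2)\<^sup>2 + (y3 - e3)\<^sup>2)"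
        using dist_hex_point_sq[of "w1 + e1" "w2 + e2" "w3 + e3" x] w that(1)
        by (simp add: y1_def y2_def y3_def algebra_simps)
      with that(2) show "(dist (hex_point (w1 + e1) (w2 + e2) (w3 + e3)) x)\<^sup>2 \<le> 3/16"
        by (simp add: dist_commute)
    qed
    consider "y2 \<le> y1" "y3 \<le> y1" | "y1 \<le> y2" "y3 \<le> y2" | "y1 \<le> y3" "y2 \<le> y3" by linarith
    then show ?thesis
    proof cases
      case 1
      with hex_cap_bound[of y1 y2 y3 t] have "dist ?c1 x \<le> sqrt 3 / 4"
        using y bounds \<open>-1/2 \<le> t\<close> near[of "1/4" "-1/8" "-1/8"] by simp
      then show ?thesis by simp
    next
      case 2
      with hex_cap_bound[of y2 y3 y1 t] have "dist ?c2 x \<le> sqrt 3 / 4"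
        using y bounds \<open>-1/2 \<le> t\<close> near[of "-1/8" "1/4" "-1/8"] by (simp add: algebra_simps)
      then show ?thesis by simp
    next
      case 3
      with hex_cap_bound[of y3 y1 y2 t] have "dist ?c3 x \<le> sqrt 3 / 4"
        using y bounds \<open>-1/2 \<le> t\<close> near[of "-1/8" "-1/8" "1/4"] by (simp add: algebra_simps)
      then show ?thesis by simp
    qed
  qed
  then show ?thesis by blast
qed

lemma hexagon_subset_three_cballs:
  "\<exists>c1 c2 c3. hexagon m1 m2 m3 \<subseteq> cball c1 (sqrt 3 / 4) \<union> cball c2 (sqrt 3 / 4) \<union> cball c3 (sqrt 3 / 4)"
proof (cases "-3/2 \<le> m1 + m2 + m3")
  case True
  then show ?thesis by (rule hexagon_subset_three_cballs_if_sum_ge)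
next
  case False
  \<comment> \<open>The point reflection x \<mapsto> -x maps this hexagon onto one covered by the first case.\<close>
  then obtain c1 c2 c3 where c: "hexagon (- m1 - 1) (- m2 - 1) (- m3 - 1)
      \<subseteq> cball c1 (sqrt 3 / 4) \<union> cball c2 (sqrt 3 / 4) \<union> cball c3 (sqrt 3 / 4)"
    using hexagon_subset_three_cballs_if_sum_ge[of "- m1 - 1" "- m2 - 1" "- m3 - 1"] by auto
  have "hexagon m1 m2 m3 \<subseteq> cball (- c1) (sqrt 3 / 4) \<union> cball (- c2) (sqrt 3 / 4) \<union> cball (- c3) (sqrt 3 / 4)"
  proof
    fix x assume "x \<in> hexagon m1 m2 m3"
    then have "- x \<in> hexagon (- m1 - 1) (- m2 - 1) (- m3 - 1)"
      using uminus_mem_hexagon_iff[of "- x"] by simp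
    with c have "- x \<in> cball c1 (sqrt 3 / 4) \<union> cball c2 (sqrt 3 / 4) \<union> cball c3 (sqrt 3 / 4)" by blast
    then show "x \<in> cball (- c1) (sqrt 3 / 4) \<union> cball (- c2) (sqrt 3 / 4) \<union> cball (- c3) (sqrt 3 / 4)"
      using dist_minus[of c1 "- x"] dist_minus[of c2 "- x"] dist_minus[of c3 "- x"] by simp
  qed
  then show ?thesis by blast
qed

lemma Inf_image_strip_bounds:
  fixes g :: "'a \<Rightarrow> real"
  assumes "x \<in> P" and width: "\<And>y z. y \<in> P \<Longrightarrow> z \<in> P \<Longrightarrow> g y - g z \<le> 1"
  shows "Inf (g ` P) \<le> g x" "g x \<le> Inf (g ` P) + 1"
proof -
  have "bdd_below (g ` P)"
    using width[OF \<open>x \<in> P\<close>] by (intro bdd_belowI2[of _ "g x - 1"]) force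
  then show "Inf (g ` P) \<le> g x" using \<open>x \<in> P\<close> by (rule cINF_lower)
  have "g x - 1 \<le> Inf (g ` P)"
    using \<open>x \<in> P\<close> width[OF \<open>x \<in> P\<close>] by (intro cINF_greatest) force+
  then show "g x \<le> Inf (g ` P) + 1" by simp
qed

theorem diameter_le_1_subset_three_cballs:
  fixes P :: "(real^2) set"
  assumes "\<And>x y. x \<in> P \<Longrightarrow> y \<in> P \<Longrightarrow> dist x y \<le> 1"
  shows "\<exists>c1 c2 c3. P \<subseteq> cball c1 (sqrt 3 / 4) \<union> cball c2 (sqrt 3 / 4) \<union> cball c3 (sqrt 3 / 4)"
proof -
  have width: "hex1 y - hex1 z \<le> 1" "hex2 y - hex2 z \<le> 1" "hex3 y - hex3 z \<le> 1"
    if "y \<in> P" "z \<in> P" for y z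
    using abs_hex_diff_le_dist[of y z] assms[OF that] by linarith+
  have "P \<subseteq> hexagon (Inf (hex1 ` P)) (Inf (hex2 ` P)) (Inf (hex3 ` P))"
    using Inf_image_strip_bounds[of _ P, OF _ width(1)] Inf_image_strip_bounds[of _ P, OF _ width(2)]
      Inf_image_strip_bounds[of _ P, OF _ width(3)]
    by (auto simp: hexagon_def)
  then show ?thesis using hexagon_subset_three_cballs by (meson subset_trans)
qed

lemma card_le_three_times_card_Int:
  assumes "finite P" "P \<subseteq> A \<union> B \<union> C"
  shows "\<exists>X\<in>{A, B, C}. card P \<le> 3 * card (P \<inter> X)"
proof -
  have "P = (P \<inter> A) \<union> (P \<inter> B) \<union> (P \<inter> C)" using assms(2) by blast
  then have "card P \<le> card ((P \<inter> A) \<union> (P \<inter> B)) + card (P \<inter> C)"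
    by (metis card_Un_le)
  also have "\<dots> \<le> card (P \<inter> A) + card (P \<inter> B) + card (P \<inter> C)"
    using card_Un_le[of "P \<inter> A" "P \<inter> B"] by simp
  finally have "card P \<le> 3 * card (P \<inter> A) \<or> card P \<le> 3 * card (P \<inter> B) \<or> card P \<le> 3 * card (P \<inter> C)"
    by linarith
  then show ?thesis by blast
qed

lemma exists_cball_containing_third:
  assumes "P \<in> point_family n" "sqrt 3 / 4 \<le> r"
  shows "\<exists>c. nat \<lceil>real n / 3\<rceil> \<le> card (P \<inter> cball c r)"
proof -
  have P: "finite P" "card P = n" "\<And>x y. x \<in> P \<Longrightarrow> y \<in> P \<Longrightarrow> dist x y \<le> 1"
    using assms(1) by (auto simp: point_family_def)
  obtain c1 c2 c3 where "P \<subseteq> cball c1 (sqrt 3 / 4) \<union> cball c2 (sqrt 3 / 4) \<union> cball c3 (sqrt 3 / 4)"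
    using diameter_le_1_subset_three_cballs[OF P(3)] by blast
  moreover have "cball c (sqrt 3 / 4) \<subseteq> cball c r" for c :: "real^2"
    using assms(2) by (rule subset_cball)
  ultimately have "P \<subseteq> cball c1 r \<union> cball c2 r \<union> cball c3 r" by blast
  then obtain c where "n \<le> 3 * card (P \<inter> cball c r)"
    using card_le_three_times_card_Int[OF P(1)] P(2) by blast
  then have "real n / 3 \<le> real (card (P \<inter> cball c r))" by simp
  then show ?thesis by (auto simp: nat_le_iff ceiling_le_iff)
qed

(* The vertices of an equilateral triangle of side 1 centred at the origin. *)
definition triangle_vertex :: "nat \<Rightarrow> real^2" where
  "triangle_vertex k =
    (if k = 0 then vector [0, 1 / sqrt 3]
     else if k = 1 then vector [- 1/2, - 1 / (2 * sqrt 3)]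
     else vector [1/2, - 1 / (2 * sqrt 3)])"

lemma triangle_vertex_nonzero: "triangle_vertex k \<noteq> 0"
proof -
  have "triangle_vertex k $ 2 \<noteq> 0" by (simp add: triangle_vertex_def)
  then show ?thesis by auto
qed

lemma dist_scaled_triangle_vertices_sq:
  assumes "k < 3" "l < 3"
  shows "(dist (a *\<^sub>R triangle_vertex k) (b *\<^sub>R triangle_vertex l))\<^sup>2
    = (if k = l then (a - b)\<^sup>2 / 3 else (a\<^sup>2 + a * b + b\<^sup>2) / 3)"
proof -
  have k: "k = 0 \<or> k = 1 \<or> k = 2" and l: "l = 0 \<or> l = 1 \<or> l = 2" using assms by auto
  have "sqrt 3 * sqrt 3 = (3::real)" by simp
  then show ?thesis
    using k l unfolding dist_vec2_sq by (auto simp: triangle_vertex_def power2_eq_square field_simps)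
qed

lemma dist_scaled_triangle_vertices_le_1:
  assumes "k < 3" "l < 3" "0 \<le> a" "a \<le> 1" "0 \<le> b" "b \<le> 1"
  shows "dist (a *\<^sub>R triangle_vertex k) (b *\<^sub>R triangle_vertex l) \<le> 1"
proof (rule power2_le_imp_le)
  have "(a - b)\<^sup>2 \<le> 1" "a\<^sup>2 \<le> 1" "b\<^sup>2 \<le> 1" "a * b \<le> 1"
    using assms by (auto simp: abs_square_le_1 power_le_one mult_le_one)
  then show "(dist (a *\<^sub>R triangle_vertex k) (b *\<^sub>R triangle_vertex l))\<^sup>2 \<le> 1\<^sup>2"
    using assms by (simp add: dist_scaled_triangle_vertices_sq)
qed simp

lemma dist_scaled_triangle_vertices_gt:
  assumes "k < 3" "l < 3" "k \<noteq> l" "0 \<le> s" "s < a" "s < b"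
  shows "s < dist (a *\<^sub>R triangle_vertex k) (b *\<^sub>R triangle_vertex l)"
proof (rule power2_less_imp_less)
  have "s\<^sup>2 < a\<^sup>2" "s\<^sup>2 < b\<^sup>2" "s\<^sup>2 < a * b"
    using assms by (auto simp: power2_eq_square intro: mult_strict_mono)
  then show "s\<^sup>2 < (dist (a *\<^sub>R triangle_vertex k) (b *\<^sub>R triangle_vertex l))\<^sup>2"
    using assms by (simp add: dist_scaled_triangle_vertices_sq)
qed simp

lemma card_residue_class_le:
  assumes "0 < m"
  shows "card {i \<in> {..<n}. i mod m = k} \<le> nat \<lceil>real n / real m\<rceil>"
proof -
  have "{i \<in> {..<n}. i mod m = k} \<subseteq> (\<lambda>q. m * q + k) ` {..<nat \<lceil>real n / real m\<rceil>}"
  proof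
    fix i assume "i \<in> {i \<in> {..<n}. i mod m = k}"
    then have i: "i < n" "i mod m = k" by auto
    have "real (i div m) \<le> real i / real m" by (rule of_nat_div_le_of_nat)
    also have "\<dots> < real n / real m" using assms i(1) by (simp add: divide_strict_right_mono)
    also have "\<dots> \<le> of_int \<lceil>real n / real m\<rceil>" by (rule le_of_int_ceiling)
    finally have "i div m < nat \<lceil>real n / real m\<rceil>" by linarith
    moreover have "i = m * (i div m) + k" using i(2) div_mult_mod_eq[of i m] by (simp add: mult.commute)
    ultimately show "i \<in> (\<lambda>q. m * q + k) ` {..<nat \<lceil>real n / real m\<rceil>}" by blast
  qed
  then have "card {i \<in> {..<n}. i mod m = k} \<le> card ((\<lambda>q. m * q + k) ` {..<nat \<lceil>real n / real m\<rceil>})"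
    by (intro card_mono) auto
  also have "\<dots> \<le> nat \<lceil>real n / real m\<rceil>"
    using card_image_le[of "{..<nat \<lceil>real n / real m\<rceil>}" "\<lambda>q. m * q + k"] by simp
  finally show ?thesis .
qed

lemma card_Int_cball_le_if_classes_separated:
  assumes "0 < m"
    and separated: "\<And>i j. i < n \<Longrightarrow> j < n \<Longrightarrow> i mod m \<noteq> j mod m \<Longrightarrow> 2 * r < dist (f i) (f j)"
  shows "card (f ` {..<n} \<inter> cball c r) \<le> nat \<lceil>real n / real m\<rceil>"
proof (cases "f ` {..<n} \<inter> cball c r = {}")
  case False
  then obtain i0 where i0: "i0 < n" "f i0 \<in> cball c r" by auto
  have "f ` {..<n} \<inter> cball c r \<subseteq> f ` {i \<in> {..<n}. i mod m = i0 mod m}"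
  proof
    fix x assume x: "x \<in> f ` {..<n} \<inter> cball c r"
    then obtain i where i: "i < n" "x = f i" by auto
    have "dist (f i) (f i0) \<le> dist (f i) c + dist c (f i0)" by (rule dist_triangle)
    also have "\<dots> \<le> 2 * r" using x i i0(2) by (simp add: dist_commute)
    finally have "i mod m = i0 mod m" using separated[OF i(1) i0(1)] by fastforce
    then show "x \<in> f ` {i \<in> {..<n}. i mod m = i0 mod m}" using i by auto
  qed
  then have "card (f ` {..<n} \<inter> cball c r) \<le> card (f ` {i \<in> {..<n}. i mod m = i0 mod m})"
    by (intro card_mono) auto
  also have "\<dots> \<le> card {i \<in> {..<n}. i mod m = i0 mod m}" by (rule card_image_le) simp
  also have "\<dots> \<le> nat \<lceil>real n / real m\<rceil>" using assms(1) by (rule card_residue_class_le)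
  finally show ?thesis .
qed simp

lemma exists_point_family_sparse_in_cballs:
  assumes "0 \<le> r" "r < 1/2"
  shows "\<exists>P\<in>point_family n. \<forall>c. card (P \<inter> cball c r) \<le> nat \<lceil>real n / 3\<rceil>"
proof -
  define \<epsilon> where "\<epsilon> = (1 - 2 * r) / (real n + 1)"
  define scale where "scale i = 1 - \<epsilon> * real (i div 3)" for i
  define f where "f i = scale i *\<^sub>R triangle_vertex (i mod 3)" for i
  have "0 < \<epsilon>" using assms by (simp add: \<epsilon>_def)
  have scale: "2 * r < scale i" "scale i \<le> 1" if "i < n" for i
  proof -
    have "\<epsilon> * real (i div 3) \<le> \<epsilon> * real n" using that \<open>0 < \<epsilon>\<close> by (intro mult_left_mono) auto
    also have "\<epsilon> * real n < 1 - 2 * r" using assms by (simp add: \<epsilon>_def field_simps)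
    finally show "2 * r < scale i" by (simp add: scale_def)
    show "scale i \<le> 1" using \<open>0 < \<epsilon>\<close> by (simp add: scale_def)
  qed
  have separated: "2 * r < dist (f i) (f j)" if "i < n" "j < n" "i mod 3 \<noteq> j mod 3" for i j
    unfolding f_def using that assms(1) scale[OF that(1)] scale[OF that(2)]
    by (intro dist_scaled_triangle_vertices_gt) auto
  have "inj_on f {..<n}"
  proof (rule inj_onI)
    fix i j assume ij: "i \<in> {..<n}" "j \<in> {..<n}" "f i = f j"
    then have "i mod 3 = j mod 3" using separated[of i j] assms(1) by force
    with ij(3) have "scale i = scale j" by (simp add: f_def triangle_vertex_nonzero)
    then have "i div 3 = j div 3" using \<open>0 < \<epsilon>\<close> by (simp add: scale_def)
    with \<open>i mod 3 = j mod 3\<close> show "i = j" by (metis div_mult_mod_eq)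
  qed
  moreover have "dist (f i) (f j) \<le> 1" if "i < n" "j < n" for i j
    unfolding f_def using that assms(1) scale[OF that(1)] scale[OF that(2)]
    by (intro dist_scaled_triangle_vertices_le_1) auto
  ultimately have "f ` {..<n} \<in> point_family n"
    by (auto simp: point_family_def card_image)
  moreover have "card (f ` {..<n} \<inter> cball c r) \<le> nat \<lceil>real n / 3\<rceil>" for c
    using card_Int_cball_le_if_classes_separated[of 3 n r f c] separated by simp
  ultimately show ?thesis by blast
qed

lemma N_eqI:
  assumes "\<And>P. P \<in> point_family n \<Longrightarrow> \<exists>c. k \<le> card (P \<inter> cball c r)"
    and "P0 \<in> point_family n" "\<And>c. card (P0 \<inter> cball c r) \<le> k"
  shows "N n r = k"
  unfolding N_def
proof (rule Greatest_equality)
  show "\<forall>P\<in>point_family n. \<exists>c. k \<le> card (P \<inter> cball c r)" using assms(1) by blast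
next
  fix k' assume "\<forall>P\<in>point_family n. \<exists>c. k' \<le> card (P \<inter> cball c r)"
  then obtain c where "k' \<le> card (P0 \<inter> cball c r)" using assms(2) by blast
  with assms(3)[of c] show "k' \<le> k" by linarith
qed

theorem theorem2:
  fixes n :: nat and r :: real
  assumes "n \<ge> 1" and "sqrt 3 / 4 \<le> r" and "r < 1 / 2"
  shows "N n r = nat \<lceil>real n / 3\<rceil>"
proof -
  have "0 \<le> sqrt 3 / 4" by simp
  with assms(2) have "0 \<le> r" by linarith
  then obtain P0 where P0: "P0 \<in> point_family n" "\<And>c. card (P0 \<inter> cball c r) \<le> nat \<lceil>real n / 3\<rceil>"
    using exists_point_family_sparse_in_cballs assms(3) by blast
  have "\<exists>c. nat \<lceil>real n / 3\<rceil> \<le> card (P \<inter> cball c r)" if "P \<in> point_family n" for P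
    using that assms(2) by (rule exists_cball_containing_third)
  then show ?thesis using P0 by (rule N_eqI)
qed

end
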